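(* Let $\mu,\sigma$ be nonzero constants, let $J$ be an open interval, let $a$ be a smooth function on $J$ with $a(y)\neq0$, and let $A$ be an antiderivative of $a$ on $J$ with $A(y)\neq0$ for all $y\in J$. Consider the PDE $$a'(y)U-a(y)U_y-3\mu U^2U_r+\sigma U_yU_{rr}-\sigma UU_{rry}=0$$ for $U=U(r,y)$, $(r,y)\in\mathbb{R}\times J$. For a smooth function $R$ on $\mathbb{R}$, the function $$U(r,y)=a(y)A(y)^{-2/3}R\big(rA(y)^{1/3}\big)$$ (real cube roots) solves this PDE if and only if $R=R(z)$ satisfies $$-\sigma zRR'''+\sigma zR'R''-2\sigma RR''-9\mu R^2R'-zR'+2R=0.$$ *)

theory Defs
  imports "HOL-Analysis.Analysis"
begin

definition smooth_on :: "real set \<Rightarrow> (real \<Rightarrow> real) \<Rightarrow> bool" where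
  "smooth_on S f \<longleftrightarrow> (\<forall>n. \<forall>x\<in>S. ((deriv ^^ n) f) differentiable (at x))"

definition dr :: "(real \<Rightarrow> real \<Rightarrow> real) \<Rightarrow> real \<Rightarrow> real \<Rightarrow> real" where
  "dr U r y = deriv (\<lambda>s. U s y) r"
definition dy :: "(real \<Rightarrow> real \<Rightarrow> real) \<Rightarrow> real \<Rightarrow> real \<Rightarrow> real" where
  "dy U r y = deriv (\<lambda>t. U r t) y"

end

theory Submission
  imports Defs
begin

text \<open>Write \<open>c = A\<^bsup>1/3\<^esup>\<close>, so that \<open>c' = a / (3 c\<^sup>2)\<close>. For the ansatz
  \<open>U r y = a y c(y)\<^sup>-\<^sup>2 R (r c y)\<close> every \<open>r\<close>-derivative only multiplies the amplitude
  by \<open>c\<close>, and the \<open>y\<close>-derivatives are computed by the product and chain rules. Substituting,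
  the PDE residual at \<open>(r, y)\<close> equals \<open>a\<^sup>3 / (3 c\<^sup>5)\<close> times the ODE residual at
  \<open>z = r c y\<close>. Since \<open>a\<close> and \<open>c\<close> do not vanish and \<open>r \<mapsto> r c y\<close> is onto,
  the PDE holds everywhere iff the ODE does.\<close>

definition similarity_ansatz ::
    "(real \<Rightarrow> real) \<Rightarrow> (real \<Rightarrow> real) \<Rightarrow> (real \<Rightarrow> real) \<Rightarrow> real \<Rightarrow> real \<Rightarrow> real" where
  "similarity_ansatz a c R = (\<lambda>r t. a t * inverse ((c t)^2) * R (r * c t))"

definition pde_residual ::
    "real \<Rightarrow> real \<Rightarrow> (real \<Rightarrow> real) \<Rightarrow> (real \<Rightarrow> real \<Rightarrow> real) \<Rightarrow> real \<Rightarrow> real \<Rightarrow> real" where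
  "pde_residual \<mu> \<sigma> a U r y =
     deriv a y * U r y - a y * dy U r y - 3 * \<mu> * (U r y)^2 * dr U r y
     + \<sigma> * dy U r y * dr (dr U) r y - \<sigma> * U r y * dy (dr (dr U)) r y"

definition ode_residual :: "real \<Rightarrow> real \<Rightarrow> (real \<Rightarrow> real) \<Rightarrow> real \<Rightarrow> real" where
  "ode_residual \<mu> \<sigma> R z =
     - \<sigma> * z * R z * (deriv ^^ 3) R z + \<sigma> * z * deriv R z * (deriv ^^ 2) R z
     - 2 * \<sigma> * R z * (deriv ^^ 2) R z - 9 * \<mu> * (R z)^2 * deriv R z
     - z * deriv R z + 2 * R z"

lemma smooth_on_has_real_derivative:
  assumes "smooth_on S f" and "x \<in> S"
  shows "((deriv ^^ n) f has_real_derivative (deriv ^^ Suc n) f x) (at x)"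
  using assms unfolding smooth_on_def by (simp add: DERIV_deriv_iff_real_differentiable)

lemma cube_root_has_real_derivative:
  assumes "(A has_real_derivative a) (at y)" and "A y \<noteq> 0"
  shows "((\<lambda>t. root 3 (A t)) has_real_derivative a / (3 * (root 3 (A y))^2)) (at y)"
proof -
  have "(root 3 has_real_derivative inverse (real 3 * root 3 (A y) ^ (3 - Suc 0))) (at (A y))"
    by (rule DERIV_odd_real_root) (use assms(2) in auto)
  from DERIV_chain2[OF this assms(1)] show ?thesis
    by (simp add: field_simps)
qed

lemma dr_similarity_ansatz:
  assumes "\<And>x. (R has_real_derivative R' x) (at x)"
  shows "dr (similarity_ansatz a c R) = similarity_ansatz (\<lambda>t. a t * c t) c R'"
  unfolding dr_def similarity_ansatz_def
  by (intro ext DERIV_imp_deriv)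
     (auto intro!: derivative_eq_intros DERIV_chain2[OF assms])

lemma dy_similarity_ansatz:
  assumes "\<And>x. (R has_real_derivative R' x) (at x)"
    and "(a has_real_derivative a') (at y)" and "(c has_real_derivative c') (at y)"
    and "c y \<noteq> 0"
  shows "dy (similarity_ansatz a c R) r y =
           (a' * c y - 2 * a y * c') / (c y)^3 * R (r * c y) + a y * r * c' / (c y)^2 * R' (r * c y)"
  unfolding dy_def similarity_ansatz_def
  using assms(4)
  by (intro DERIV_imp_deriv)
     (auto intro!: derivative_eq_intros assms(2,3) DERIV_chain2[OF assms(1)]
        simp: field_simps power2_eq_square power3_eq_cube)

lemma pde_residual_similarity_ansatz:
  assumes R: "smooth_on UNIV R"
    and a: "(a has_real_derivative deriv a y) (at y)"
    and c: "(c has_real_derivative a y / (3 * (c y)^2)) (at y)" and c0: "c y \<noteq> 0"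
  shows "pde_residual \<mu> \<sigma> a (similarity_ansatz a c R) r y =
           (a y)^3 / (3 * (c y)^5) * ode_residual \<mu> \<sigma> R (r * c y)"
proof -
  let ?U = "similarity_ansatz a c R"
  have dR: "\<And>n x. ((deriv ^^ n) R has_real_derivative (deriv ^^ Suc n) R x) (at x)"
    using smooth_on_has_real_derivative[OF R] by blast
  have dR0: "\<And>x. (R has_real_derivative deriv R x) (at x)"
    and dR1: "\<And>x. (deriv R has_real_derivative (deriv ^^ 2) R x) (at x)"
    and dR2: "\<And>x. ((deriv ^^ 2) R has_real_derivative (deriv ^^ 3) R x) (at x)"
    using dR[of 0] dR[of 1] dR[of 2] by (simp_all add: numeral_2_eq_2 numeral_3_eq_3)
  have dacc: "((\<lambda>t. a t * c t * c t) has_real_derivative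
               deriv a y * c y * c y + 2 * a y * c y * (a y / (3 * (c y)^2))) (at y)"
    by (auto intro!: derivative_eq_intros a c simp: algebra_simps)
  have drU: "dr ?U = similarity_ansatz (\<lambda>t. a t * c t) c (deriv R)"
    by (rule dr_similarity_ansatz[OF dR0])
  note drrU = dr_similarity_ansatz[OF dR1, of "\<lambda>t. a t * c t" c]
  note dyU = dy_similarity_ansatz[OF dR0 a c c0]
  note dyrrU = dy_similarity_ansatz[OF dR2 dacc c c0]
  show ?thesis
    unfolding pde_residual_def ode_residual_def drrU drU dyU dyrrU
    using c0 by (simp add: similarity_ansatz_def field_simps eval_nat_numeral)
qed

lemma all_scaled_iff:
  fixes c :: real
  assumes "c \<noteq> 0"
  shows "(\<forall>r. P (r * c)) \<longleftrightarrow> (\<forall>z. P z)"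
  using assms by (metis nonzero_divide_eq_eq)

theorem mainTheorem5:
  fixes \<mu> \<sigma> :: real and J :: "real set" and a A R :: "real \<Rightarrow> real"
  assumes "\<mu> \<noteq> 0" and "\<sigma> \<noteq> 0"
    and "open J" and "is_interval J" and "J \<noteq> {}"
    and "smooth_on J a" and "\<forall>y\<in>J. a y \<noteq> 0"
    and "\<forall>y\<in>J. (A has_real_derivative a y) (at y)"
    and "\<forall>y\<in>J. A y \<noteq> 0"
    and "smooth_on UNIV R"
  shows "(let U = (\<lambda>r y. a y * inverse ((root 3 (A y))^2) * R (r * root 3 (A y))) in
           \<forall>r. \<forall>y\<in>J.
             deriv a y * U r y - a y * dy U r y - 3 * \<mu> * (U r y)^2 * dr U r y
             + \<sigma> * dy U r y * dr (dr U) r y - \<sigma> * U r y * dy (dr (dr U)) r y = 0)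
     \<longleftrightarrow>
     (\<forall>z. - \<sigma> * z * R z * (deriv ^^ 3) R z + \<sigma> * z * deriv R z * (deriv ^^ 2) R z
           - 2 * \<sigma> * R z * (deriv ^^ 2) R z - 9 * \<mu> * (R z)^2 * deriv R z
           - z * deriv R z + 2 * R z = 0)"
proof -
  define c where "c = (\<lambda>t. root 3 (A t))"
  have c0: "c y \<noteq> 0" if "y \<in> J" for y
    using assms(9) that by (simp add: c_def)
  have da: "(a has_real_derivative deriv a y) (at y)" if "y \<in> J" for y
    using smooth_on_has_real_derivative[OF assms(6) that, of 0] by simp
  have dc: "(c has_real_derivative a y / (3 * (c y)^2)) (at y)" if "y \<in> J" for y
    using cube_root_has_real_derivative assms(8,9) that unfolding c_def by blast
  have residual: "pde_residual \<mu> \<sigma> a (similarity_ansatz a c R) r y =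
      (a y)^3 / (3 * (c y)^5) * ode_residual \<mu> \<sigma> R (r * c y)" if "y \<in> J" for r y
    using pde_residual_similarity_ansatz[OF assms(10) da dc c0] that by blast
  have "(\<forall>r. \<forall>y\<in>J. pde_residual \<mu> \<sigma> a (similarity_ansatz a c R) r y = 0)
      \<longleftrightarrow> (\<forall>y\<in>J. \<forall>r. ode_residual \<mu> \<sigma> R (r * c y) = 0)"
    using residual assms(7) c0 by auto
  also have "\<dots> \<longleftrightarrow> (\<forall>z. ode_residual \<mu> \<sigma> R z = 0)"
    using all_scaled_iff[where P = "\<lambda>z. ode_residual \<mu> \<sigma> R z = 0", OF c0] assms(5) by blast
  finally show ?thesis
    by (simp add: pde_residual_def ode_residual_def similarity_ansatz_def c_def)
qed

end
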